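(* A graph $G$ admits a proper straight-line drawing with spanning ratio equal to $1$ if and only if $G$ is a point visibility graph.
   Context: A drawing of a graph maps each vertex to a distinct point of the plane and each edge to a Jordan arc between its end-vertices; it is straight-line if every edge is drawn as the straight-line segment between its end-vertices. A straight-line drawing is proper if no two vertices coincide and no edge contains a vertex other than its end-vertices. In a straight-line drawing $\Gamma$, the length of a path is the sum of the Euclidean lengths of its edges, $\pi_\Gamma(u,v)$ is the minimum length of a path between $u$ and $v$, and $\|uv\|_\Gamma$ is the Euclidean distance between $u$ and $v$. The spanning ratio of $\Gamma$ is $\max_{u\neq v}\pi_\Gamma(u,v)/\|uv\|_\Gamma$. A graph $G$ is a point visibility graph if there is a finite point set $P\subset\mathbb R^2$ such that $G$ has one vertex per point of $P$ and two vertices are adjacent if and only if the open straight-line segment between the corresponding points contains no point of $P$. *)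

theory Defs
  imports "HOL-Analysis.Analysis" "HOL-Library.Extended_Real"
begin

definition graph :: "'a set \<Rightarrow> ('a \<Rightarrow> 'a \<Rightarrow> bool) \<Rightarrow> bool" where
  "graph V E \<longleftrightarrow> finite V \<and>
     (\<forall>u v. E u v \<longrightarrow> u \<in> V \<and> v \<in> V \<and> u \<noteq> v \<and> E v u)"

text \<open>A straight-line drawing is determined by the placement p of the vertices
  (edges are the segments between their end-points); vertices go to distinct points.\<close>
definition straight_line_drawing ::
  "'a set \<Rightarrow> ('a \<Rightarrow> 'a \<Rightarrow> bool) \<Rightarrow> ('a \<Rightarrow> real^2) \<Rightarrow> bool" where
  "straight_line_drawing V E p \<longleftrightarrow> inj_on p V"

definition proper_drawing ::
  "'a set \<Rightarrow> ('a \<Rightarrow> 'a \<Rightarrow> bool) \<Rightarrow> ('a \<Rightarrow> real^2) \<Rightarrow> bool" where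
  "proper_drawing V E p \<longleftrightarrow> straight_line_drawing V E p \<and>
     (\<forall>u v w. E u v \<longrightarrow> w \<in> V \<longrightarrow> w \<noteq> u \<longrightarrow> w \<noteq> v \<longrightarrow>
        p w \<notin> closed_segment (p u) (p v))"

definition is_path :: "('a \<Rightarrow> 'a \<Rightarrow> bool) \<Rightarrow> 'a list \<Rightarrow> 'a \<Rightarrow> 'a \<Rightarrow> bool" where
  "is_path E xs u v \<longleftrightarrow> xs \<noteq> [] \<and> hd xs = u \<and> last xs = v \<and> distinct xs \<and>
     (\<forall>i. Suc i < length xs \<longrightarrow> E (xs ! i) (xs ! Suc i))"

definition path_length :: "('a \<Rightarrow> real^2) \<Rightarrow> 'a list \<Rightarrow> real" where
  "path_length p xs = (\<Sum>i<length xs - 1. dist (p (xs ! i)) (p (xs ! Suc i)))"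

text \<open>Shortest-path length (infinite if no path exists).\<close>
definition path_dist ::
  "('a \<Rightarrow> 'a \<Rightarrow> bool) \<Rightarrow> ('a \<Rightarrow> real^2) \<Rightarrow> 'a \<Rightarrow> 'a \<Rightarrow> ereal" where
  "path_dist E p u v = Inf {ereal (path_length p xs) | xs. is_path E xs u v}"

text \<open>Convention: with fewer than two vertices the ratio is 1 (the value 1 is a lower
  bound of every ratio, so it does not affect the maximum otherwise).\<close>
definition spanning_ratio ::
  "'a set \<Rightarrow> ('a \<Rightarrow> 'a \<Rightarrow> bool) \<Rightarrow> ('a \<Rightarrow> real^2) \<Rightarrow> ereal" where
  "spanning_ratio V E p = Sup (insert 1
     {path_dist E p u v / ereal (dist (p u) (p v)) | u v. u \<in> V \<and> v \<in> V \<and> u \<noteq> v})"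

definition point_visibility_graph :: "'a set \<Rightarrow> ('a \<Rightarrow> 'a \<Rightarrow> bool) \<Rightarrow> bool" where
  "point_visibility_graph V E \<longleftrightarrow>
     (\<exists>(P :: (real^2) set) f. finite P \<and> bij_betw f V P \<and>
        (\<forall>u\<in>V. \<forall>v\<in>V. u \<noteq> v \<longrightarrow> (E u v \<longleftrightarrow> open_segment (f u) (f v) \<inter> P = {})))"

end

theory Submission
  imports Defs
begin

text \<open>A path between u and v whose length equals the distance of their images runs along the
  segment between them. So in a drawing of spanning ratio 1, if no vertex lies strictly between
  two vertices then the only such path is an edge, while properness says that edges see no
  vertex: the drawing itself exhibits G as a point visibility graph. Conversely, in a visibility
  drawing one walks from u to v along the segment, always stepping to the nearest vertex on it,
  which yields a path of length exactly the distance; and edges pass through no other vertex.\<close>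

lemma in_closed_segment_iff_dist:
  fixes x :: "'a::euclidean_space"
  shows "x \<in> closed_segment a b \<longleftrightarrow> dist a b = dist a x + dist x b"
  using between between_mem_segment by metis

lemma first_point_on_open_segment:
  fixes a b :: "'a::euclidean_space"
  assumes "finite Q" "Q \<inter> open_segment a b \<noteq> {}"
  obtains q where "q \<in> Q \<inter> open_segment a b" "open_segment a q \<inter> Q = {}"
proof -
  obtain q where q: "is_arg_min (dist a) (\<lambda>q. q \<in> Q \<inter> open_segment a b) q"
    using ex_is_arg_min_if_finite[of "Q \<inter> open_segment a b" "dist a"] assms by blast
  have "open_segment a q \<subseteq> open_segment a b"
    using q by (auto simp: is_arg_min_def subset_open_segment open_closed_segment)
  moreover have "dist a z < dist a q" if "z \<in> open_segment a q" for z
    using dist_in_open_segment[OF that] by (simp add: dist_commute)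
  ultimately have "open_segment a q \<inter> Q = {}"
    using q unfolding is_arg_min_def by blast
  with q show thesis
    using that unfolding is_arg_min_def by blast
qed

lemma path_length_Cons:
  "xs \<noteq> [] \<Longrightarrow> path_length p (x # xs) = dist (p x) (p (hd xs)) + path_length p xs"
  by (cases xs) (simp_all add: path_length_def sum.lessThan_Suc_shift del: sum.lessThan_Suc)

lemma dist_le_path_length:
  "xs \<noteq> [] \<Longrightarrow> dist (p (hd xs)) (p (last xs)) \<le> path_length p xs"
proof (induction xs)
  case (Cons x xs)
  show ?case
  proof (cases "xs = []")
    case False
    then show ?thesis
      using Cons.IH path_length_Cons[OF False, of p x]
        dist_triangle[of "p x" "p (last xs)" "p (hd xs)"] by simp
  qed (simp add: path_length_def)
qed simp

lemma path_on_closed_segment_if_length_eq_dist: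
  assumes "xs \<noteq> []" "path_length p xs = dist (p (hd xs)) (p (last xs))"
  shows "p ` set xs \<subseteq> closed_segment (p (hd xs)) (p (last xs))"
  using assms
proof (induction xs)
  case (Cons x xs)
  show ?case
  proof (cases "xs = []")
    case False
    let ?a = "p x" and ?b = "p (hd xs)" and ?c = "p (last xs)"
    have "dist ?a ?c \<le> dist ?a ?b + dist ?b ?c"
      by (rule dist_triangle)
    moreover have "dist ?b ?c \<le> path_length p xs"
      using dist_le_path_length[OF False] .
    moreover have "dist ?a ?b + path_length p xs = dist ?a ?c"
      using Cons.prems False by (simp add: path_length_Cons)
    ultimately have "dist ?a ?c = dist ?a ?b + dist ?b ?c" "path_length p xs = dist ?b ?c"
      by linarith+
    then have "?b \<in> closed_segment ?a ?c" "p ` set xs \<subseteq> closed_segment ?b ?c"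
      using Cons.IH False in_closed_segment_iff_dist[of ?b ?a ?c] by simp_all
    then have "p ` set xs \<subseteq> closed_segment ?a ?c"
      using subset_closed_segment[of ?b ?c ?a ?c] by auto
    then show ?thesis
      using False by simp
  qed simp
qed simp

lemma is_path_edge: "E u v \<Longrightarrow> u \<noteq> v \<Longrightarrow> is_path E [u, v] u v"
  unfolding is_path_def by (auto simp: less_Suc_eq)

lemma is_path_Cons:
  assumes "is_path E xs w v" "E u w" "u \<notin> set xs"
  shows "is_path E (u # xs) u v"
  unfolding is_path_def
proof (intro conjI allI impI)
  fix i assume "Suc i < length (u # xs)"
  then show "E ((u # xs) ! i) ((u # xs) ! Suc i)"
    using assms(1,2) by (cases i) (auto simp: is_path_def hd_conv_nth)
qed (use assms in \<open>auto simp: is_path_def\<close>)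

lemma is_path_subset_vertices:
  assumes "graph V E" "is_path E xs u v" "u \<in> V"
  shows "set xs \<subseteq> V"
proof
  fix x assume "x \<in> set xs"
  then obtain i where i: "i < length xs" "x = xs ! i"
    by (auto simp: in_set_conv_nth)
  show "x \<in> V"
  proof (cases i)
    case 0
    then show ?thesis
      using assms i by (cases xs) (auto simp: is_path_def)
  next
    case (Suc j)
    then have "E (xs ! j) x"
      using assms(2) i unfolding is_path_def by auto
    then show ?thesis
      using assms(1) unfolding graph_def by blast
  qed
qed

lemma dist_le_path_dist: "ereal (dist (p u) (p v)) \<le> path_dist E p u v"
  unfolding path_dist_def
  by (rule Inf_greatest) (auto simp: is_path_def dest: dist_le_path_length[of _ p])

lemma path_dist_le_path_length:
  "is_path E xs u v \<Longrightarrow> path_dist E p u v \<le> ereal (path_length p xs)"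
  unfolding path_dist_def by (rule Inf_lower) blast

lemma path_dist_attained:
  assumes "graph V E" "u \<in> V" "path_dist E p u v \<noteq> \<infinity>"
  obtains xs where "is_path E xs u v" "path_dist E p u v = ereal (path_length p xs)"
proof -
  define T where "T = {ereal (path_length p xs) | xs. is_path E xs u v}"
  have "T \<subseteq> (\<lambda>xs. ereal (path_length p xs)) ` {xs. set xs \<subseteq> V \<and> distinct xs}"
    unfolding T_def using is_path_subset_vertices[OF assms(1) _ assms(2)]
    by (auto simp: is_path_def)
  moreover have "finite V"
    using assms(1) unfolding graph_def by blast
  ultimately have "finite T"
    using finite_subset_distinct finite_subset by blast
  moreover have "path_dist E p u v = Inf T"
    unfolding path_dist_def T_def ..
  then have "T \<noteq> {}"
    using assms(3) by (auto simp: top_ereal_def)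
  ultimately have "Inf T \<in> T"
    using cInf_eq_Min[of T] Min_in[of T] by simp
  then show thesis
    using that \<open>path_dist E p u v = Inf T\<close> unfolding T_def by auto
qed

lemma spanning_ratio_eq_1_iff:
  assumes "inj_on p V"
  shows "spanning_ratio V E p = 1 \<longleftrightarrow>
    (\<forall>u\<in>V. \<forall>v\<in>V. u \<noteq> v \<longrightarrow> path_dist E p u v = ereal (dist (p u) (p v)))"
proof -
  have ratio: "path_dist E p u v / ereal (dist (p u) (p v)) \<le> 1 \<longleftrightarrow>
      path_dist E p u v = ereal (dist (p u) (p v))" if "u \<in> V" "v \<in> V" "u \<noteq> v" for u v
  proof -
    have "dist (p u) (p v) > 0"
      using assms that by (auto simp: inj_on_def)
    then show ?thesis
      using dist_le_path_dist[of p u v E] by (auto simp: ereal_divide_le_pos)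
  qed
  have sup_eq_1: "Sup (insert 1 S) = (1::ereal) \<longleftrightarrow> (\<forall>x\<in>S. x \<le> 1)" for S
    by (metis Sup_le_iff Sup_upper antisym insert_iff insertI1 order_refl)
  have "spanning_ratio V E p = 1 \<longleftrightarrow>
      (\<forall>u\<in>V. \<forall>v\<in>V. u \<noteq> v \<longrightarrow> path_dist E p u v / ereal (dist (p u) (p v)) \<le> 1)"
    unfolding spanning_ratio_def sup_eq_1 by blast
  with ratio show ?thesis
    by blast
qed

lemma proper_drawing_iff:
  assumes "graph V E"
  shows "proper_drawing V E p \<longleftrightarrow>
    inj_on p V \<and> (\<forall>u v. E u v \<longrightarrow> open_segment (p u) (p v) \<inter> p ` V = {})"
proof -
  have "p w \<in> closed_segment (p u) (p v) \<longleftrightarrow> p w \<in> open_segment (p u) (p v)"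
    if "inj_on p V" "E u v" "w \<in> V" "w \<noteq> u" "w \<noteq> v" for u v w
    using that assms unfolding graph_def inj_on_def open_segment_def by auto
  moreover have "u \<in> V" "v \<in> V" if "E u v" for u v
    using assms that unfolding graph_def by auto
  ultimately show ?thesis
    unfolding proper_drawing_def straight_line_drawing_def open_segment_def by blast
qed

lemma straight_path_if_visible_pairs_adjacent:
  assumes "finite V" "inj_on p V"
    and adj: "\<And>u v. u \<in> V \<Longrightarrow> v \<in> V \<Longrightarrow> u \<noteq> v \<Longrightarrow>
      open_segment (p u) (p v) \<inter> p ` V = {} \<Longrightarrow> E u v"
    and "u \<in> V" "v \<in> V" "u \<noteq> v"
  shows "\<exists>xs. is_path E xs u v \<and> path_length p xs = dist (p u) (p v) \<and>
    p ` set xs \<subseteq> closed_segment (p u) (p v)"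
  using assms(4-6)
proof (induction "card (p ` V \<inter> closed_segment (p u) (p v))" arbitrary: u rule: less_induct)
  case less
  show ?case
  proof (cases "open_segment (p u) (p v) \<inter> p ` V = {}")
    case True
    then have "is_path E [u, v] u v"
      using adj less.prems by (simp add: is_path_edge)
    then show ?thesis
      by (intro exI[of _ "[u, v]"]) (simp add: path_length_def)
  next
    case False
    then obtain w where w: "w \<in> V" "p w \<in> open_segment (p u) (p v)"
      and seen: "open_segment (p u) (p w) \<inter> p ` V = {}"
      using first_point_on_open_segment[of "p ` V" "p u" "p v"] assms(1) by blast
    then have "w \<noteq> u" "w \<noteq> v"
      by (auto simp: open_segment_def)
    then have "E u w"
      using adj less.prems w(1) seen by blast
    have far: "p u \<notin> closed_segment (p w) (p v)"
      using dist_in_open_segment[OF w(2)] dist_in_closed_segment[of "p u" "p w" "p v"] by auto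
    have sub: "closed_segment (p w) (p v) \<subseteq> closed_segment (p u) (p v)"
      using w(2) by (simp add: subset_closed_segment open_closed_segment)
    then have "p ` V \<inter> closed_segment (p w) (p v) \<subset> p ` V \<inter> closed_segment (p u) (p v)"
      using far less.prems by auto
    then have "card (p ` V \<inter> closed_segment (p w) (p v)) <
        card (p ` V \<inter> closed_segment (p u) (p v))"
      using assms(1) by (simp add: psubset_card_mono)
    then obtain xs where xs: "is_path E xs w v" "path_length p xs = dist (p w) (p v)"
      "p ` set xs \<subseteq> closed_segment (p w) (p v)"
      using less.hyps w(1) less.prems(2) \<open>w \<noteq> v\<close> by blast
    have "xs \<noteq> []" "hd xs = w"
      using xs(1) by (auto simp: is_path_def)
    then have "path_length p (u # xs) = dist (p u) (p w) + dist (p w) (p v)"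
      using xs(2) by (simp add: path_length_Cons)
    also have "\<dots> = dist (p u) (p v)"
      using open_closed_segment[OF w(2)] by (simp add: in_closed_segment_iff_dist)
    finally have "path_length p (u # xs) = dist (p u) (p v)" .
    moreover have "is_path E (u # xs) u v"
      using is_path_Cons[OF xs(1) \<open>E u w\<close>] xs(3) far by blast
    moreover have "p ` set (u # xs) \<subseteq> closed_segment (p u) (p v)"
      using xs(3) sub by auto
    ultimately show ?thesis
      by (intro exI[of _ "u # xs"]) simp
  qed
qed

lemma adjacent_if_straight_and_no_vertex_between:
  assumes "graph V E" "inj_on p V" "u \<in> V" "v \<in> V" "u \<noteq> v"
    and straight: "path_dist E p u v = ereal (dist (p u) (p v))"
    and "open_segment (p u) (p v) \<inter> p ` V = {}"
  shows "E u v"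
proof -
  obtain xs where "is_path E xs u v" "path_dist E p u v = ereal (path_length p xs)"
    using path_dist_attained[OF assms(1,3), of p v] straight by auto
  with straight have xs: "is_path E xs u v" "path_length p xs = dist (p u) (p v)"
    by simp_all
  then have "p ` set xs \<subseteq> closed_segment (p u) (p v)"
    using path_on_closed_segment_if_length_eq_dist[of xs p] by (auto simp: is_path_def)
  moreover have "set xs \<subseteq> V"
    using is_path_subset_vertices[OF assms(1) xs(1) assms(3)] .
  ultimately have "set xs \<subseteq> {u, v}"
    using assms(2-4,7) unfolding inj_on_def closed_segment_eq_open by blast
  obtain ys where ys: "xs = u # ys" "ys \<noteq> []"
    using xs(1) assms(5) unfolding is_path_def by (cases xs) (auto split: if_splits)
  then have "hd ys = v"
    using \<open>set xs \<subseteq> {u, v}\<close> xs(1) by (cases ys) (auto simp: is_path_def)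
  moreover have "E (xs ! 0) (xs ! Suc 0)"
    using xs(1) ys unfolding is_path_def by auto
  ultimately show ?thesis
    using ys by (simp add: hd_conv_nth)
qed

definition visibility_drawing ::
  "'a set \<Rightarrow> ('a \<Rightarrow> 'a \<Rightarrow> bool) \<Rightarrow> ('a \<Rightarrow> real^2) \<Rightarrow> bool" where
  "visibility_drawing V E p \<longleftrightarrow> inj_on p V \<and>
     (\<forall>u\<in>V. \<forall>v\<in>V. u \<noteq> v \<longrightarrow> (E u v \<longleftrightarrow> open_segment (p u) (p v) \<inter> p ` V = {}))"

lemma point_visibility_graph_iff_visibility_drawing:
  assumes "finite V"
  shows "point_visibility_graph V E \<longleftrightarrow> (\<exists>p. visibility_drawing V E p)"
  unfolding point_visibility_graph_def visibility_drawing_def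
  using assms by (auto simp: bij_betw_def inj_on_imp_bij_betw)

lemma visibility_drawing_if_proper_spanning_ratio_1:
  assumes "graph V E" "proper_drawing V E p" "spanning_ratio V E p = 1"
  shows "visibility_drawing V E p"
proof -
  have inj: "inj_on p V" and edges: "\<And>u v. E u v \<Longrightarrow> open_segment (p u) (p v) \<inter> p ` V = {}"
    using assms(1,2) proper_drawing_iff by blast+
  have "\<forall>u\<in>V. \<forall>v\<in>V. u \<noteq> v \<longrightarrow> path_dist E p u v = ereal (dist (p u) (p v))"
    using assms(3) spanning_ratio_eq_1_iff[OF inj] by blast
  then show ?thesis
    unfolding visibility_drawing_def
    using inj edges adjacent_if_straight_and_no_vertex_between[OF assms(1) inj] by blast
qed

lemma proper_spanning_ratio_1_if_visibility_drawing:
  assumes "graph V E" "visibility_drawing V E p"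
  shows "proper_drawing V E p" "spanning_ratio V E p = 1"
proof -
  have fin: "finite V" and inj: "inj_on p V"
    using assms unfolding graph_def visibility_drawing_def by blast+
  have vis: "E u v \<longleftrightarrow> open_segment (p u) (p v) \<inter> p ` V = {}"
    if "u \<in> V" "v \<in> V" "u \<noteq> v" for u v
    using assms(2) that unfolding visibility_drawing_def by blast
  then have adj: "\<And>u v. u \<in> V \<Longrightarrow> v \<in> V \<Longrightarrow> u \<noteq> v \<Longrightarrow>
      open_segment (p u) (p v) \<inter> p ` V = {} \<Longrightarrow> E u v"
    by blast
  have "E u v \<Longrightarrow> open_segment (p u) (p v) \<inter> p ` V = {}" for u v
    using vis assms(1) unfolding graph_def by blast
  then show "proper_drawing V E p"
    using proper_drawing_iff[OF assms(1)] inj by blast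
  have "path_dist E p u v = ereal (dist (p u) (p v))"
    if uv: "u \<in> V" "v \<in> V" "u \<noteq> v" for u v
  proof -
    obtain xs where "is_path E xs u v" "path_length p xs = dist (p u) (p v)"
      using straight_path_if_visible_pairs_adjacent[where E = E, OF fin inj adj uv] by blast
    then show ?thesis
      using path_dist_le_path_length[of E xs u v p] dist_le_path_dist[of p u v E] by simp
  qed
  then show "spanning_ratio V E p = 1"
    using spanning_ratio_eq_1_iff[OF inj] by blast
qed

theorem lemma2:
  assumes "graph V E"
  shows "(\<exists>p. proper_drawing V E p \<and> spanning_ratio V E p = 1) \<longleftrightarrow>
         point_visibility_graph V E"
proof -
  have "finite V"
    using assms unfolding graph_def by blast
  then show ?thesis
    unfolding point_visibility_graph_iff_visibility_drawing[OF \<open>finite V\<close>]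
    using visibility_drawing_if_proper_spanning_ratio_1[OF assms]
      proper_spanning_ratio_1_if_visibility_drawing[OF assms] by blast
qed

end
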